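(* For $\theta\in(0,\pi/4]$, let $|\psi_\theta\rangle=\cos\theta|00\rangle+\sin\theta|11\rangle$ be a two-qubit pure state on $AB$ and $\psi_\theta=|\psi_\theta\rangle\langle\psi_\theta|$. Then its optimal unilocal 2-broadcasting fidelity on $A$ is \[ f_2(\psi_\theta)=\begin{cases}\cos^2\theta+\dfrac{\sin^2\theta}{\sqrt2}, & \theta\in(0,\arctan(2^{-1/4})],\\[2mm] \Big(\tfrac32(\cos^4\theta+\sin^4\theta)\Big)^{1/2}, & \theta\in(\arctan(2^{-1/4}),\pi/4].\end{cases} \]
   Context: Fidelity: $F(\rho,\sigma)=\mathrm{tr}\sqrt{\sqrt{\rho}\sigma\sqrt{\rho}}$. Let $A_1,A_2$ be copies of the qubit system $A$. The optimal unilocal $2$-broadcasting fidelity of a state $\rho_{AB}$ on $A$ is \[f_2(\rho_{AB})=\sup\Big\{\frac12\sum_{j=1}^2F\big(\rho_{AB},\mathrm{tr}_{\backslash A_jB}(\Lambda_{A\to A_1A_2}\otimes\mathrm{id}_B)(\rho_{AB})\big):\ \Lambda \text{ a quantum channel}\Big\},\] where $\mathrm{tr}_{\backslash A_jB}$ traces out all systems other than $A_j$ and $B$, and $A_j$ is identified with $A$. *)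

theory Defs
  imports "HOL-Analysis.Analysis" "Jordan_Normal_Form.Matrix"
begin

(* Complex matrices: Jordan_Normal_Form 'complex mat'.
   Composite-system index convention: for systems X (dim dX) and Y (dim dY),
   the basis vector |x>|y> of X (x) Y has index x * dY + y. *)

definition mtrace :: "complex mat \<Rightarrow> complex" where
  "mtrace A = (\<Sum>i<dim_row A. A $$ (i,i))"

definition adj :: "complex mat \<Rightarrow> complex mat" where
  "adj A = mat (dim_col A) (dim_row A) (\<lambda>(i,j). cnj (A $$ (j,i)))"

definition psd :: "nat \<Rightarrow> complex mat \<Rightarrow> bool" where
  "psd n A \<longleftrightarrow> A \<in> carrier_mat n n \<and> adj A = A \<and>
     (\<forall>v \<in> carrier_vec n.
        let q = (\<Sum>i<n. \<Sum>j<n. cnj (v $ i) * A $$ (i,j) * v $ j) in Im q = 0 \<and> Re q \<ge> 0)"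

definition psd_sqrt :: "complex mat \<Rightarrow> complex mat" where
  "psd_sqrt A = (THE S. psd (dim_row A) S \<and> S * S = A)"

definition fidelity :: "complex mat \<Rightarrow> complex mat \<Rightarrow> real" where
  "fidelity \<rho> \<sigma> = Re (mtrace (psd_sqrt (psd_sqrt \<rho> * \<sigma> * psd_sqrt \<rho>)))"

(* (L (x) id_Y)(X) for a map L from dX x dX matrices to dO x dO matrices,
   X a matrix on X (x) Y with dim Y = dY *)
definition tensor_id :: "(complex mat \<Rightarrow> complex mat) \<Rightarrow> nat \<Rightarrow> nat \<Rightarrow> nat \<Rightarrow> complex mat \<Rightarrow> complex mat" where
  "tensor_id L dX dO dY X = mat (dO * dY) (dO * dY) (\<lambda>(i,j).
      L (mat dX dX (\<lambda>(a,a'). X $$ (a * dY + i mod dY, a' * dY + j mod dY))) $$ (i div dY, j div dY))"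

definition quantum_channel :: "(complex mat \<Rightarrow> complex mat) \<Rightarrow> nat \<Rightarrow> nat \<Rightarrow> bool" where
  "quantum_channel L dX dO \<longleftrightarrow>
     (\<forall>X \<in> carrier_mat dX dX. L X \<in> carrier_mat dO dO) \<and>
     (\<forall>X \<in> carrier_mat dX dX. \<forall>Y \<in> carrier_mat dX dX. L (X + Y) = L X + L Y) \<and>
     (\<forall>X \<in> carrier_mat dX dX. \<forall>c. L (c \<cdot>\<^sub>m X) = c \<cdot>\<^sub>m L X) \<and>
     (\<forall>X \<in> carrier_mat dX dX. mtrace (L X) = mtrace X) \<and>
     (\<forall>n X. psd (dX * n) X \<longrightarrow> psd (dO * n) (tensor_id L dX dO n X))"

(* Qubit case. A1A2B index: (a1*2 + a2)*2 + b.  Reduced states on A1B and A2B,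
   with A_j identified with A (index a*2 + b). *)
definition red_A1B :: "complex mat \<Rightarrow> complex mat" where
  "red_A1B T = mat 4 4 (\<lambda>(i,j).
     (\<Sum>a2<2. T $$ (((i div 2) * 2 + a2) * 2 + i mod 2, ((j div 2) * 2 + a2) * 2 + j mod 2)))"

definition red_A2B :: "complex mat \<Rightarrow> complex mat" where
  "red_A2B T = mat 4 4 (\<lambda>(i,j).
     (\<Sum>a1<2. T $$ ((a1 * 2 + i div 2) * 2 + i mod 2, (a1 * 2 + j div 2) * 2 + j mod 2)))"

definition f2 :: "complex mat \<Rightarrow> real" where
  "f2 \<rho> = Sup {(fidelity \<rho> (red_A1B (tensor_id L 2 4 2 \<rho>))
               + fidelity \<rho> (red_A2B (tensor_id L 2 4 2 \<rho>))) / 2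
             | L. quantum_channel L 2 4}"

definition psi_vec :: "real \<Rightarrow> complex vec" where
  "psi_vec \<theta> = vec 4 (\<lambda>i. if i = 0 then complex_of_real (cos \<theta>)
                          else if i = 3 then complex_of_real (sin \<theta>) else 0)"

definition psi :: "real \<Rightarrow> complex mat" where
  "psi \<theta> = mat 4 4 (\<lambda>(i,j). psi_vec \<theta> $ i * cnj (psi_vec \<theta> $ j))"

end

(* Since psi_theta is pure, F(psi_theta, sigma) = sqrt <psi_theta|sigma|psi_theta>.  As psi_theta
   arises from the maximally entangled state by the local operator diag(cos theta, sin theta) on B,
   the overlaps <psi_theta|rho_AjB|psi_theta> of the two reduced output states are linear in the
   Choi matrix J of the channel, with C = cos^2 theta and S = sin^2 theta as coefficients.  By
   concavity of the square root it suffices to bound their sum, a semidefinite program over the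
   positive matrices J whose partial trace over A1A2 is the identity.  Dual solutions (y0, y1),
   certified by positivity of 2x2 principal minors of J, bound the sum by 2 V^2, where V is the
   claimed value, and a channel with two Kraus operators, symmetric in A1 and A2, attains it
   (for small theta the isometry |0> -> |00>, |1> -> (|01> + |10>)/sqrt 2). *)

theory Submission
  imports Defs
begin

lemma index_mult_mat_sum:
  assumes "A \<in> carrier_mat n k" "B \<in> carrier_mat k m" "i < n" "j < m"
  shows "(A * B) $$ (i,j) = (\<Sum>l<k. A $$ (i,l) * B $$ (l,j))"
  using assms by (simp add: scalar_prod_def atLeast0LessThan)

lemma sum_lessThan_4: "(\<Sum>k<4::nat. f k) = f 0 + f 1 + f 2 + (f 3 :: 'a::comm_monoid_add)"
  by (simp add: numeral_eq_Suc lessThan_Suc add_ac)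

lemma sum_lessThan_2: "(\<Sum>k<2::nat. f k) = f 0 + (f 1 :: 'a::comm_monoid_add)"
  by (simp add: numeral_eq_Suc lessThan_Suc add_ac)

lemma sum_lessThan_mult:
  fixes d n :: nat
  shows "(\<Sum>i<d*n. f i) = (\<Sum>u<d. \<Sum>y<n. f (u*n + y))"
proof -
  have "(\<Sum>i<d*n. f i) = (\<Sum>u<d. sum f {u*n..<u*n + n})" using sum.nat_group[of f n d] by simp
  also have "\<dots> = (\<Sum>u<d. \<Sum>y<n. f (u*n + y))"
    by (rule sum.cong[OF refl]) (simp add: sum.atLeastLessThan_shift_0[of f] atLeast0LessThan comp_def)
  finally show ?thesis .
qed

lemma sum_reorder_6:
  "(\<Sum>u\<in>U. \<Sum>y\<in>Y. \<Sum>u'\<in>U. \<Sum>y'\<in>Y. \<Sum>a\<in>A. \<Sum>a'\<in>A. G u y u' y' a a')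
 = (\<Sum>a\<in>A. \<Sum>y\<in>Y. \<Sum>a'\<in>A. \<Sum>y'\<in>Y. \<Sum>u\<in>U. \<Sum>u'\<in>U. (G u y u' y' a a' :: 'b::comm_monoid_add))"
  unfolding sum.cartesian_product
  by (rule sum.reindex_bij_witness[where i = "\<lambda>(a,y,a',y',u,u'). (u,y,u',y',a,a')"
        and j = "\<lambda>(u,y,u',y',a,a'). (a,y,a',y',u,u')"]) auto

section \<open>Positive semidefinite matrices\<close>

definition quad_form :: "nat \<Rightarrow> complex mat \<Rightarrow> (nat \<Rightarrow> complex) \<Rightarrow> complex" where
  "quad_form n A f = (\<Sum>i<n. \<Sum>j<n. cnj (f i) * A $$ (i,j) * f j)"

lemma psd_quad_form:
  assumes "psd n A"
  shows "Im (quad_form n A f) = 0" "Re (quad_form n A f) \<ge> 0"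
proof -
  have v: "vec n f \<in> carrier_vec n" by simp
  have e: "quad_form n A f = (\<Sum>i<n. \<Sum>j<n. cnj (vec n f $ i) * A $$ (i,j) * vec n f $ j)"
    unfolding quad_form_def by (intro sum.cong refl) auto
  from assms v show "Im (quad_form n A f) = 0" "Re (quad_form n A f) \<ge> 0"
    unfolding psd_def Let_def e by blast+
qed

lemma psd_hermitian:
  assumes "psd n A" "i < n" "j < n"
  shows "A $$ (j,i) = cnj (A $$ (i,j))"
proof -
  from assms have c: "A \<in> carrier_mat n n" and h: "adj A = A" unfolding psd_def by auto
  have "adj A $$ (i,j) = cnj (A $$ (j,i))" using c assms unfolding adj_def by auto
  then show ?thesis using h by simp
qed

lemma if_zero_complex_simps:
  fixes a x :: complex
  shows "(if P then a else 0) * x = (if P then a * x else 0)"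
    "x * (if P then a else 0) = (if P then x * a else 0)"
    "cnj (if P then a else 0) = (if P then cnj a else 0)"
  by simp_all

lemma quad_form_unit:
  assumes "i < n"
  shows "quad_form n A (\<lambda>k. if k = i then 1 else 0) = A $$ (i,i)"
  using assms unfolding quad_form_def by (simp add: if_zero_complex_simps sum.delta)

lemma quad_form_two_point:
  assumes "i \<noteq> j" "i < n" "j < n"
  shows "quad_form n A (\<lambda>k. if k = i then a else if k = j then b else 0) =
    cnj a * a * A $$ (i,i) + cnj a * b * A $$ (i,j) + cnj b * a * A $$ (j,i) + cnj b * b * A $$ (j,j)"
proof -
  have split: "(\<lambda>k. if k = i then a else if k = j then b else 0) =
      (\<lambda>k. (if k = i then a else 0) + (if k = j then b else 0))"
    using assms by auto
  show ?thesis
    unfolding quad_form_def split using assms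
    by (simp add: if_zero_complex_simps distrib_left distrib_right sum.distrib sum.delta)
qed

lemma psd_diag_nonneg:
  assumes "psd n A" "i < n"
  shows "Re (A $$ (i,i)) \<ge> 0"
  using psd_quad_form(2)[OF assms(1), of "\<lambda>k. if k = i then 1 else 0"] quad_form_unit[OF assms(2)] by simp

text \<open>Positivity on the vector \<open>(\<surd>a, -m/\<surd>a)\<close> supported on \<open>i, j\<close>.\<close>
lemma psd_off_diag_le:
  assumes A: "psd n A" and ij: "i \<noteq> j" "i < n" "j < n"
    and a: "a \<ge> 0" and b: "b \<ge> 0" and m: "m\<^sup>2 \<le> a * b"
  shows "m * (Re (A $$ (i,j)) + Re (A $$ (j,i))) \<le> a * Re (A $$ (i,i)) + b * Re (A $$ (j,j))"
proof (cases "a = 0")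
  case True
  then show ?thesis using m b psd_diag_nonneg[OF A ij(3)] by simp
next
  case False
  then have ap: "a > 0" using a by simp
  define x where "x = sqrt a"
  define y where "y = - m / sqrt a"
  have "0 \<le> Re (quad_form n A (\<lambda>k. if k = i then complex_of_real x else if k = j then complex_of_real y else 0))"
    by (rule psd_quad_form(2)[OF A])
  then have "0 \<le> x*x * Re (A $$ (i,i)) + x*y * (Re (A $$ (i,j)) + Re (A $$ (j,i))) + y*y * Re (A $$ (j,j))"
    unfolding quad_form_two_point[OF ij] by (simp add: algebra_simps)
  moreover have "x*x = a" "x*y = -m" "y*y = m\<^sup>2 / a"
    unfolding x_def y_def using ap by (auto simp: power2_eq_square)
  moreover have "m\<^sup>2 / a * Re (A $$ (j,j)) \<le> b * Re (A $$ (j,j))"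
    using m ap psd_diag_nonneg[OF A ij(3)] by (intro mult_right_mono) (simp_all add: field_simps mult.commute)
  ultimately show ?thesis by simp
qed

lemma psd_add:
  assumes A: "psd n A" and B: "psd n B"
  shows "psd n (A + B)"
proof -
  have Ac: "A \<in> carrier_mat n n" and Bc: "B \<in> carrier_mat n n" using A B unfolding psd_def by auto
  have "adj (A + B) = A + B"
  proof (rule eq_matI)
    fix i j assume "i < dim_row (A + B)" "j < dim_col (A + B)"
    then have ij: "i < n" "j < n" using Bc by auto
    show "adj (A + B) $$ (i,j) = (A + B) $$ (i,j)"
      unfolding adj_def using ij Ac Bc psd_hermitian[OF A ij(2,1)] psd_hermitian[OF B ij(2,1)] by simp
  qed (use Ac Bc in \<open>auto simp: adj_def\<close>)
  moreover have "Im q = 0 \<and> Re q \<ge> 0"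
    if "q = (\<Sum>i<n. \<Sum>j<n. cnj (v $ i) * (A + B) $$ (i,j) * v $ j)" for q v
  proof -
    have "q = quad_form n A (\<lambda>i. v $ i) + quad_form n B (\<lambda>i. v $ i)"
      unfolding that quad_form_def using Ac Bc by (simp add: sum.distrib[symmetric] algebra_simps)
    then show ?thesis using psd_quad_form[OF A] psd_quad_form[OF B] by simp
  qed
  ultimately show ?thesis unfolding psd_def Let_def using Ac Bc by auto
qed

section \<open>Kraus maps\<close>

lemma adj_carrier: "K \<in> carrier_mat m n \<Longrightarrow> adj K \<in> carrier_mat n m"
  unfolding adj_def by auto

lemma index_adj: "K \<in> carrier_mat m n \<Longrightarrow> i < n \<Longrightarrow> j < m \<Longrightarrow> adj K $$ (i,j) = cnj (K $$ (j,i))"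
  unfolding adj_def by auto

lemma dim_adj [simp]: "dim_row (adj K) = dim_col K" "dim_col (adj K) = dim_row K"
  unfolding adj_def by auto

lemma kraus_carrier: "K \<in> carrier_mat dO dX \<Longrightarrow> Y \<in> carrier_mat dX dX \<Longrightarrow> K * Y * adj K \<in> carrier_mat dO dO"
  using adj_carrier by (metis mult_carrier_mat)

lemma index_kraus:
  assumes K: "K \<in> carrier_mat dO dX" and B: "B \<in> carrier_mat dX dX" and u: "u < dO" "u' < dO"
  shows "(K * B * adj K) $$ (u,u') = (\<Sum>a<dX. \<Sum>a'<dX. K $$ (u,a) * B $$ (a,a') * cnj (K $$ (u',a')))"
proof -
  have KB: "K * B \<in> carrier_mat dO dX" using K B by auto
  have "(K * B * adj K) $$ (u,u') = (\<Sum>a'<dX. (\<Sum>a<dX. K $$ (u,a) * B $$ (a,a')) * cnj (K $$ (u',a')))"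
    using u by (simp add: index_mult_mat_sum[OF KB adj_carrier[OF K]] index_mult_mat_sum[OF K B] index_adj[OF K])
  also have "\<dots> = (\<Sum>a'<dX. \<Sum>a<dX. K $$ (u,a) * B $$ (a,a') * cnj (K $$ (u',a')))"
    by (simp add: sum_distrib_right)
  also have "\<dots> = (\<Sum>a<dX. \<Sum>a'<dX. K $$ (u,a) * B $$ (a,a') * cnj (K $$ (u',a')))"
    by (rule sum.swap)
  finally show ?thesis .
qed

lemma mult_add_mod_less: "(a::nat) < d \<Longrightarrow> r < n \<Longrightarrow> a * n + r < d * n"
proof -
  assume "a < d" "r < n"
  then have "a * n + r < Suc a * n" by simp
  also have "\<dots> \<le> d * n" using \<open>a < d\<close> by (intro mult_le_mono1) simp
  finally show ?thesis .
qed

lemma index_tensor_id_kraus: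
  assumes K: "K \<in> carrier_mat dO dX" and ij: "i < dO*n" "j < dO*n"
  shows "tensor_id (\<lambda>Y. K * Y * adj K) dX dO n X $$ (i,j) =
    (\<Sum>a<dX. \<Sum>a'<dX. K $$ (i div n, a) * X $$ (a*n + i mod n, a'*n + j mod n) * cnj (K $$ (j div n, a')))"
proof -
  define B where "B = mat dX dX (\<lambda>(a,a'). X $$ (a * n + i mod n, a' * n + j mod n))"
  have "tensor_id (\<lambda>Y. K * Y * adj K) dX dO n X $$ (i,j) = (K * B * adj K) $$ (i div n, j div n)"
    unfolding tensor_id_def B_def using ij by simp
  also have "\<dots> = (\<Sum>a<dX. \<Sum>a'<dX. K $$ (i div n, a) * B $$ (a,a') * cnj (K $$ (j div n, a')))"
    using ij by (intro index_kraus[OF K]) (auto simp: B_def less_mult_imp_div_less)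
  finally show ?thesis unfolding B_def by simp
qed

lemma adj_tensor_id_kraus:
  assumes K: "K \<in> carrier_mat dO dX" and X: "psd (dX*n) X"
  shows "adj (tensor_id (\<lambda>Y. K * Y * adj K) dX dO n X) = tensor_id (\<lambda>Y. K * Y * adj K) dX dO n X"
    (is "adj ?T = ?T")
proof (rule eq_matI)
  have Xh: "\<And>p q. p < dX*n \<Longrightarrow> q < dX*n \<Longrightarrow> cnj (X $$ (p,q)) = X $$ (q,p)"
    using psd_hermitian[OF X] by (metis complex_cnj_cnj)
  fix i j assume "i < dim_row ?T" "j < dim_col ?T"
  then have ij: "i < dO*n" "j < dO*n" unfolding tensor_id_def by auto
  then have "i mod n < n" "j mod n < n" by (metis mod_less_divisor mult_0_right not_gr_zero not_less_zero)+
  have "adj ?T $$ (i,j) = cnj (?T $$ (j,i))" unfolding adj_def tensor_id_def using ij by auto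
  also have "\<dots> = (\<Sum>a<dX. \<Sum>a'<dX. cnj (K $$ (j div n, a)) * X $$ (a'*n + i mod n, a*n + j mod n) * K $$ (i div n, a'))"
    unfolding index_tensor_id_kraus[OF K ij(2) ij(1)]
    using \<open>i mod n < n\<close> \<open>j mod n < n\<close> mult_add_mod_less by (simp add: Xh)
  also have "\<dots> = ?T $$ (i,j)"
    unfolding index_tensor_id_kraus[OF K ij] by (subst sum.swap) (simp add: mult_ac)
  finally show "adj ?T $$ (i,j) = ?T $$ (i,j)" .
qed (auto simp: adj_def tensor_id_def)

lemma quad_form_tensor_id_kraus:
  assumes K: "K \<in> carrier_mat dO dX"
  shows "quad_form (dO*n) (tensor_id (\<lambda>Y. K * Y * adj K) dX dO n X) f
    = quad_form (dX*n) X (\<lambda>m. \<Sum>u<dO. cnj (K $$ (u, m div n)) * f (u*n + m mod n))"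
    (is "quad_form _ ?T f = quad_form _ X ?w")
proof -
  define G where "G u y u' y' a a' = cnj (f (u*n+y)) * K $$ (u,a) * X $$ (a*n+y, a'*n+y')
      * cnj (K $$ (u',a')) * f (u'*n+y')" for u y u' y' a a'
  have "quad_form (dO*n) ?T f
      = (\<Sum>u<dO. \<Sum>y<n. \<Sum>u'<dO. \<Sum>y'<n. cnj (f (u*n+y)) * ?T $$ (u*n+y,u'*n+y') * f (u'*n+y'))"
    unfolding quad_form_def sum_lessThan_mult[of _ dO n] ..
  also have "\<dots> = (\<Sum>u<dO. \<Sum>y<n. \<Sum>u'<dO. \<Sum>y'<n. \<Sum>a<dX. \<Sum>a'<dX. G u y u' y' a a')"
    unfolding G_def using mult_add_mod_less
    by (intro sum.cong refl) (simp add: index_tensor_id_kraus[OF K] sum_distrib_left sum_distrib_right mult_ac)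
  also have "\<dots> = (\<Sum>a<dX. \<Sum>y<n. \<Sum>a'<dX. \<Sum>y'<n. \<Sum>u<dO. \<Sum>u'<dO. G u y u' y' a a')"
    by (rule sum_reorder_6)
  also have "\<dots> = (\<Sum>a<dX. \<Sum>y<n. \<Sum>a'<dX. \<Sum>y'<n. cnj (?w (a*n+y)) * X $$ (a*n+y, a'*n+y') * ?w (a'*n+y'))"
    unfolding G_def by (intro sum.cong refl) (simp add: sum_distrib_left sum_distrib_right mult_ac)
  also have "\<dots> = quad_form (dX*n) X ?w"
    unfolding quad_form_def sum_lessThan_mult[of _ dX n] ..
  finally show ?thesis .
qed

lemma psd_tensor_id_kraus:
  assumes K: "K \<in> carrier_mat dO dX" and X: "psd (dX*n) X"
  shows "psd (dO*n) (tensor_id (\<lambda>Y. K * Y * adj K) dX dO n X)"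
proof -
  have "(\<Sum>i<dO*n. \<Sum>j<dO*n. cnj (v $ i) * tensor_id (\<lambda>Y. K * Y * adj K) dX dO n X $$ (i,j) * v $ j)
      = quad_form (dO*n) (tensor_id (\<lambda>Y. K * Y * adj K) dX dO n X) (\<lambda>i. v $ i)" for v
    unfolding quad_form_def ..
  then show ?thesis
    unfolding psd_def Let_def quad_form_tensor_id_kraus[OF K]
    using adj_tensor_id_kraus[OF K X] psd_quad_form[OF X] by (simp add: tensor_id_def)
qed

lemma tensor_id_add:
  assumes f: "\<And>Y. Y \<in> carrier_mat dX dX \<Longrightarrow> f Y \<in> carrier_mat dO dO"
    and g: "\<And>Y. Y \<in> carrier_mat dX dX \<Longrightarrow> g Y \<in> carrier_mat dO dO"
  shows "tensor_id (\<lambda>Y. f Y + g Y) dX dO n X = tensor_id f dX dO n X + tensor_id g dX dO n X"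
proof (rule eq_matI)
  fix i j assume "i < dim_row (tensor_id f dX dO n X + tensor_id g dX dO n X)"
    "j < dim_col (tensor_id f dX dO n X + tensor_id g dX dO n X)"
  then have ij: "i div n < dO" "j div n < dO" unfolding tensor_id_def by (auto simp: less_mult_imp_div_less)
  define B where "B = mat dX dX (\<lambda>(a,a'). X $$ (a * n + i mod n, a' * n + j mod n))"
  have "B \<in> carrier_mat dX dX" unfolding B_def by simp
  then have "f B \<in> carrier_mat dO dO" "g B \<in> carrier_mat dO dO" using f g by blast+
  then show "tensor_id (\<lambda>Y. f Y + g Y) dX dO n X $$ (i,j) = (tensor_id f dX dO n X + tensor_id g dX dO n X) $$ (i,j)"
    using \<open>i < _\<close> \<open>j < _\<close> ij unfolding tensor_id_def by (simp add: B_def[symmetric])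
qed (auto simp: tensor_id_def)

section \<open>Fidelity with the pure state \<open>\<psi>\<^sub>\<theta>\<close>\<close>

definition psi_coeff :: "real \<Rightarrow> nat \<Rightarrow> complex" where
  "psi_coeff \<theta> i = (if i = 0 then complex_of_real (cos \<theta>) else if i = 3 then complex_of_real (sin \<theta>) else 0)"

lemma psi_carrier: "psi \<theta> \<in> carrier_mat 4 4"
  unfolding psi_def by simp

lemma dim_psi [simp]: "dim_row (psi \<theta>) = 4" "dim_col (psi \<theta>) = 4"
  unfolding psi_def by auto

lemma index_psi: "i < 4 \<Longrightarrow> j < 4 \<Longrightarrow> psi \<theta> $$ (i,j) = psi_coeff \<theta> i * psi_coeff \<theta> j"
  unfolding psi_def psi_vec_def psi_coeff_def by auto

lemma cnj_psi_coeff [simp]: "cnj (psi_coeff \<theta> i) = psi_coeff \<theta> i"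
  unfolding psi_coeff_def by auto

lemma psi_coeff_norm: "(\<Sum>k<4. psi_coeff \<theta> k * psi_coeff \<theta> k) = 1"
proof -
  have "complex_of_real (cos \<theta> * cos \<theta> + sin \<theta> * sin \<theta>) = 1"
    using sin_cos_squared_add[of \<theta>] by (simp add: power2_eq_square algebra_simps)
  then have "complex_of_real (cos \<theta>) * complex_of_real (cos \<theta>)
      + complex_of_real (sin \<theta>) * complex_of_real (sin \<theta>) = 1"
    by (simp only: of_real_add of_real_mult)
  then show ?thesis unfolding sum_lessThan_4 psi_coeff_def by simp
qed

lemma psi_idempotent: "psi \<theta> * psi \<theta> = psi \<theta>"
proof (rule eq_matI)
  fix i j assume "i < dim_row (psi \<theta>)" "j < dim_col (psi \<theta>)"
  then have ij: "i < 4" "j < 4" by auto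
  have "(psi \<theta> * psi \<theta>) $$ (i,j) = (\<Sum>k<4. psi_coeff \<theta> i * psi_coeff \<theta> k * (psi_coeff \<theta> k * psi_coeff \<theta> j))"
    using index_mult_mat_sum[OF psi_carrier psi_carrier ij] ij by (simp add: index_psi)
  also have "\<dots> = psi_coeff \<theta> i * psi_coeff \<theta> j * (\<Sum>k<4. psi_coeff \<theta> k * psi_coeff \<theta> k)"
    by (simp add: sum_distrib_left algebra_simps)
  finally show "(psi \<theta> * psi \<theta>) $$ (i,j) = psi \<theta> $$ (i,j)"
    using ij by (simp add: psi_coeff_norm index_psi)
qed auto

lemma psd_scaled_psi:
  assumes "r \<ge> 0"
  shows "psd 4 (complex_of_real r \<cdot>\<^sub>m psi \<theta>)"
proof -
  let ?A = "complex_of_real r \<cdot>\<^sub>m psi \<theta>"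
  have idx: "?A $$ (i,j) = complex_of_real r * (psi_coeff \<theta> i * psi_coeff \<theta> j)" if "i < 4" "j < 4" for i j
    using that by (simp add: index_psi)
  have "adj ?A = ?A"
    unfolding adj_def by (rule eq_matI) (auto simp: idx index_psi)
  moreover have "Im q = 0 \<and> Re q \<ge> 0"
    if "q = (\<Sum>i<4. \<Sum>j<4. cnj (v $ i) * ?A $$ (i,j) * v $ j)" for q v
  proof -
    define W where "W = (\<Sum>j<4. psi_coeff \<theta> j * v $ j)"
    have "q = (\<Sum>i<4. \<Sum>j<4. complex_of_real r * (psi_coeff \<theta> i * cnj (v $ i)) * (psi_coeff \<theta> j * v $ j))"
      unfolding that by (intro sum.cong refl) (simp add: index_psi algebra_simps)
    also have "\<dots> = complex_of_real r * (cnj W * W)"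
      unfolding W_def by (simp add: sum_distrib_left sum_distrib_right algebra_simps)
    also have "\<dots> = complex_of_real (r * (norm W)\<^sup>2)"
      by (metis complex_norm_square mult.commute of_real_mult)
    finally show ?thesis using assms by simp
  qed
  ultimately show ?thesis unfolding psd_def Let_def by (simp add: carrier_matI)
qed

lemma scaled_psi_square:
  "(complex_of_real r \<cdot>\<^sub>m psi \<theta>) * (complex_of_real r \<cdot>\<^sub>m psi \<theta>) = complex_of_real (r * r) \<cdot>\<^sub>m psi \<theta>"
proof -
  have "(complex_of_real r \<cdot>\<^sub>m psi \<theta>) * (complex_of_real r \<cdot>\<^sub>m psi \<theta>)
      = complex_of_real r \<cdot>\<^sub>m (complex_of_real r \<cdot>\<^sub>m (psi \<theta> * psi \<theta>))"
    using mult_smult_assoc_mat[OF psi_carrier smult_carrier_mat[OF psi_carrier]]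
      mult_smult_distrib[OF psi_carrier psi_carrier] by simp
  also have "\<dots> = complex_of_real (r * r) \<cdot>\<^sub>m psi \<theta>"
    unfolding psi_idempotent by (rule eq_matI) auto
  finally show ?thesis .
qed

lemma psd_square_diag_zero:
  assumes S: "psd n S" and i: "i < n" "(S * S) $$ (i,i) = 0" and k: "k < n"
  shows "S $$ (i,k) = 0" "S $$ (k,i) = 0"
proof -
  have Sc: "S \<in> carrier_mat n n" using S unfolding psd_def by simp
  have "(S * S) $$ (i,i) = (\<Sum>k<n. S $$ (i,k) * cnj (S $$ (i,k)))"
    using i psd_hermitian[OF S i(1)] by (simp add: index_mult_mat_sum[OF Sc Sc])
  also have "\<dots> = complex_of_real (\<Sum>k<n. (norm (S $$ (i,k)))\<^sup>2)"
    by (simp only: of_real_sum complex_norm_square)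
  finally have "(\<Sum>k<n. (norm (S $$ (i,k)))\<^sup>2) = 0"
    using i(2) by (metis of_real_eq_0_iff)
  then have "\<forall>k\<in>{..<n}. (norm (S $$ (i,k)))\<^sup>2 = 0"
    by (subst sum_nonneg_eq_0_iff[symmetric]) auto
  then show "S $$ (i,k) = 0" using k by auto
  then show "S $$ (k,i) = 0" using psd_hermitian[OF S i(1) k] by simp
qed

lemma square_root_rank_one_2x2:
  fixes a d zr zi q c s :: real
  assumes c: "c > 0" and s: "s > 0" and cs: "c\<^sup>2 + s\<^sup>2 = 1" and q: "q \<ge> 0"
    and a: "a \<ge> 0" and d: "d \<ge> 0"
    and E1: "a\<^sup>2 + zr\<^sup>2 + zi\<^sup>2 = q * c\<^sup>2"
    and E2: "(a + d) * zr = q * c * s" and E2': "(a + d) * zi = 0"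
    and E3: "zr\<^sup>2 + zi\<^sup>2 + d\<^sup>2 = q * s\<^sup>2"
  shows "a = sqrt q * c\<^sup>2 \<and> d = sqrt q * s\<^sup>2 \<and> zr = sqrt q * c * s \<and> zi = 0"
proof (cases "q = 0")
  case True
  then have "a\<^sup>2 + zr\<^sup>2 + zi\<^sup>2 = 0" using E1 by simp
  then have "a = 0" "zr = 0" "zi = 0" by (smt (verit) zero_le_power2 zero_eq_power2)+
  moreover have "d = 0" using E3 True \<open>zr = 0\<close> \<open>zi = 0\<close> by simp
  ultimately show ?thesis using True by simp
next
  case False
  then have qp: "q > 0" using q by simp
  have "a + d \<noteq> 0" using E2 qp c s by auto
  then have zi: "zi = 0" using E2' by simp
  have "(a * s - zr * c)\<^sup>2 + (zr * s - d * c)\<^sup>2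
      = s\<^sup>2 * (a\<^sup>2 + zr\<^sup>2 + zi\<^sup>2) + c\<^sup>2 * (zr\<^sup>2 + zi\<^sup>2 + d\<^sup>2) - 2 * c * s * ((a + d) * zr)"
    using zi by (simp add: power2_eq_square algebra_simps)
  also have "\<dots> = 0" using E1 E2 E3 by (simp add: power2_eq_square algebra_simps)
  finally have "a * s = zr * c" and "zr * s = d * c"
    by (smt (verit) power2_less_eq_zero_iff sum_power2_eq_zero_iff)+
  then have zr: "zr = a * s / c" and dz: "d = zr * s / c" using c by (simp_all add: field_simps)
  have "a\<^sup>2 * (c\<^sup>2 + s\<^sup>2) = q * c\<^sup>2 * c\<^sup>2"
    using E1 c unfolding zi zr by (simp add: field_simps power2_eq_square)
  then have "a\<^sup>2 = (sqrt q * c\<^sup>2)\<^sup>2" using cs q by (simp add: power_mult_distrib)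
  then have aa: "a = sqrt q * c\<^sup>2" using a q by (simp add: power2_eq_iff_nonneg)
  then have "zr = sqrt q * c * s" using zr c by (simp add: power2_eq_square field_simps)
  moreover from this have "d = sqrt q * s\<^sup>2" using dz c by (simp add: power2_eq_square field_simps)
  ultimately show ?thesis using aa zi by simp
qed

lemma psd_square_scaled_psi_zero:
  assumes S: "psd 4 S" and SS: "S * S = complex_of_real q \<cdot>\<^sub>m psi \<theta>" and k: "k < 4"
  shows "S $$ (1,k) = 0" "S $$ (2,k) = 0" "S $$ (k,1) = 0" "S $$ (k,2) = 0"
  using psd_square_diag_zero[OF S, of 1 k] psd_square_diag_zero[OF S, of 2 k] k
  by (simp_all add: SS index_psi psi_coeff_def)

lemma psd_square_scaled_psi_corner:
  assumes S: "psd 4 S" and SS: "S * S = complex_of_real q \<cdot>\<^sub>m psi \<theta>"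
  shows "S $$ (0,0) * S $$ (0,0) + S $$ (0,3) * cnj (S $$ (0,3)) = complex_of_real (q * (cos \<theta>)\<^sup>2)"
    "S $$ (0,0) * S $$ (0,3) + S $$ (0,3) * S $$ (3,3) = complex_of_real (q * cos \<theta> * sin \<theta>)"
    "cnj (S $$ (0,3)) * S $$ (0,3) + S $$ (3,3) * S $$ (3,3) = complex_of_real (q * (sin \<theta>)\<^sup>2)"
proof -
  have Sc: "S \<in> carrier_mat 4 4" using S unfolding psd_def by simp
  have entry: "(\<Sum>k<4. S $$ (i,k) * S $$ (k,j)) = complex_of_real q * (psi_coeff \<theta> i * psi_coeff \<theta> j)"
    if "i < 4" "j < 4" for i j
    using that arg_cong[OF SS, of "\<lambda>M. M $$ (i,j)"] by (simp add: index_mult_mat_sum[OF Sc Sc] index_psi)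
  have "S $$ (3,0) = cnj (S $$ (0,3))" by (rule psd_hermitian[OF S]) simp_all
  then show "S $$ (0,0) * S $$ (0,0) + S $$ (0,3) * cnj (S $$ (0,3)) = complex_of_real (q * (cos \<theta>)\<^sup>2)"
    "S $$ (0,0) * S $$ (0,3) + S $$ (0,3) * S $$ (3,3) = complex_of_real (q * cos \<theta> * sin \<theta>)"
    "cnj (S $$ (0,3)) * S $$ (0,3) + S $$ (3,3) * S $$ (3,3) = complex_of_real (q * (sin \<theta>)\<^sup>2)"
    using entry[of 0 0] entry[of 0 3] entry[of 3 3]
      psd_square_scaled_psi_zero[OF S SS, of 0] psd_square_scaled_psi_zero[OF S SS, of 3]
    by (simp_all add: sum_lessThan_4 psi_coeff_def power2_eq_square)
qed

lemma psd_sqrt_unique_scaled_psi: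
  assumes c: "cos \<theta> > 0" and s: "sin \<theta> > 0" and q: "q \<ge> 0"
    and S: "psd 4 S" and SS: "S * S = complex_of_real q \<cdot>\<^sub>m psi \<theta>"
  shows "S = complex_of_real (sqrt q) \<cdot>\<^sub>m psi \<theta>"
proof -
  define a where "a = S $$ (0,0)"
  define d where "d = S $$ (3,3)"
  define z where "z = S $$ (0,3)"
  have z': "S $$ (3,0) = cnj z" unfolding z_def by (rule psd_hermitian[OF S]) simp_all
  have "a = cnj a" "d = cnj d" unfolding a_def d_def by (rule psd_hermitian[OF S]; simp)+
  then have a_real: "Im a = 0" and d_real: "Im d = 0" by (auto simp: complex_eq_iff)
  have "Re a \<ge> 0" "Re d \<ge> 0" unfolding a_def d_def by (rule psd_diag_nonneg[OF S]; simp)+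
  moreover have "(Re a)\<^sup>2 + (Re z)\<^sup>2 + (Im z)\<^sup>2 = q * (cos \<theta>)\<^sup>2"
    "(Re a + Re d) * Re z = q * cos \<theta> * sin \<theta>" "(Re a + Re d) * Im z = 0"
    "(Re z)\<^sup>2 + (Im z)\<^sup>2 + (Re d)\<^sup>2 = q * (sin \<theta>)\<^sup>2"
    using psd_square_scaled_psi_corner[OF S SS, folded a_def d_def z_def] a_real d_real
    by (simp_all add: complex_eq_iff power2_eq_square algebra_simps)
  ultimately have "Re a = sqrt q * (cos \<theta>)\<^sup>2" "Re d = sqrt q * (sin \<theta>)\<^sup>2"
    "Re z = sqrt q * cos \<theta> * sin \<theta>" "Im z = 0"
    using square_root_rank_one_2x2[OF c s sin_cos_squared_add2 q] by blast+
  then have entries: "a = complex_of_real (sqrt q * (cos \<theta>)\<^sup>2)" "d = complex_of_real (sqrt q * (sin \<theta>)\<^sup>2)"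
    "z = complex_of_real (sqrt q * cos \<theta> * sin \<theta>)"
    using a_real d_real by (simp_all add: complex_eq_iff)
  show ?thesis
  proof (rule eq_matI)
    fix i j assume "i < dim_row (complex_of_real (sqrt q) \<cdot>\<^sub>m psi \<theta>)" "j < dim_col (complex_of_real (sqrt q) \<cdot>\<^sub>m psi \<theta>)"
    then have "i \<in> {0,1,2,3}" "j \<in> {0,1,2,3}" by auto
    then show "S $$ (i,j) = (complex_of_real (sqrt q) \<cdot>\<^sub>m psi \<theta>) $$ (i,j)"
      using psd_square_scaled_psi_zero[OF S SS] entries z'
      by (auto simp: index_psi psi_coeff_def a_def[symmetric] d_def[symmetric] z_def[symmetric] power2_eq_square)
  qed (use S in \<open>auto simp: psd_def\<close>)
qed

lemma psd_sqrt_scaled_psi: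
  assumes "cos \<theta> > 0" "sin \<theta> > 0" "q \<ge> 0"
  shows "psd_sqrt (complex_of_real q \<cdot>\<^sub>m psi \<theta>) = complex_of_real (sqrt q) \<cdot>\<^sub>m psi \<theta>"
  unfolding psd_sqrt_def
proof (rule the_equality)
  show "psd (dim_row (complex_of_real q \<cdot>\<^sub>m psi \<theta>)) (complex_of_real (sqrt q) \<cdot>\<^sub>m psi \<theta>) \<and>
      complex_of_real (sqrt q) \<cdot>\<^sub>m psi \<theta> * (complex_of_real (sqrt q) \<cdot>\<^sub>m psi \<theta>) = complex_of_real q \<cdot>\<^sub>m psi \<theta>"
    using psd_scaled_psi[of "sqrt q" \<theta>] assms(3) by (simp add: scaled_psi_square)
qed (use psd_sqrt_unique_scaled_psi[OF assms] in simp)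

text \<open>\<open>\<surd>\<psi> = \<psi>\<close> and \<open>\<psi> \<sigma> \<psi> = \<langle>\<psi>|\<sigma>|\<psi>\<rangle> \<psi>\<close>.\<close>
lemma fidelity_psi:
  assumes c: "cos \<theta> > 0" and s: "sin \<theta> > 0" and \<sigma>: "\<sigma> \<in> carrier_mat 4 4"
    and p: "p = (\<Sum>i<4. \<Sum>j<4. psi_coeff \<theta> i * \<sigma> $$ (i,j) * psi_coeff \<theta> j)"
    and p_real: "Im p = 0" and p_nonneg: "Re p \<ge> 0"
  shows "fidelity (psi \<theta>) \<sigma> = sqrt (Re p)"
proof -
  have "(1::complex) \<cdot>\<^sub>m psi \<theta> = psi \<theta>" by (rule eq_matI) auto
  then have sqrt_psi: "psd_sqrt (psi \<theta>) = psi \<theta>"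
    using psd_sqrt_scaled_psi[OF c s, of 1] by simp
  have "psi \<theta> * \<sigma> * psi \<theta> = complex_of_real (Re p) \<cdot>\<^sub>m psi \<theta>"
  proof (rule eq_matI)
    fix i j assume "i < dim_row (complex_of_real (Re p) \<cdot>\<^sub>m psi \<theta>)" "j < dim_col (complex_of_real (Re p) \<cdot>\<^sub>m psi \<theta>)"
    then have ij: "i < 4" "j < 4" by auto
    have PS: "psi \<theta> * \<sigma> \<in> carrier_mat 4 4" using \<sigma> psi_carrier by auto
    have "(psi \<theta> * \<sigma> * psi \<theta>) $$ (i,j) = (\<Sum>l<4. (psi \<theta> * \<sigma>) $$ (i,l) * psi \<theta> $$ (l,j))"
      by (rule index_mult_mat_sum[OF PS psi_carrier ij])
    also have "\<dots> = (\<Sum>l<4. (\<Sum>k<4. psi_coeff \<theta> i * psi_coeff \<theta> k * \<sigma> $$ (k,l)) * (psi_coeff \<theta> l * psi_coeff \<theta> j))"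
      using ij by (intro sum.cong refl) (simp add: index_mult_mat_sum[OF psi_carrier \<sigma>] index_psi)
    also have "\<dots> = p * (psi_coeff \<theta> i * psi_coeff \<theta> j)"
      unfolding p sum_lessThan_4 by (simp add: algebra_simps)
    finally show "(psi \<theta> * \<sigma> * psi \<theta>) $$ (i,j) = (complex_of_real (Re p) \<cdot>\<^sub>m psi \<theta>) $$ (i,j)"
      using ij p_real by (simp add: index_psi complex_eq_iff)
  qed auto
  then have "fidelity (psi \<theta>) \<sigma> = Re (mtrace (complex_of_real (sqrt (Re p)) \<cdot>\<^sub>m psi \<theta>))"
    unfolding fidelity_def sqrt_psi by (simp add: psd_sqrt_scaled_psi[OF c s p_nonneg])
  also have "\<dots> = sqrt (Re p)"
    unfolding mtrace_def using psi_coeff_norm[of \<theta>]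
    by (simp add: index_psi sum_distrib_left[symmetric])
  finally show ?thesis .
qed

section \<open>Overlaps as functionals of the Choi matrix\<close>

definition phi_plus :: "complex mat" where
  "phi_plus = mat 4 4 (\<lambda>(i,j). if (i = 0 \<or> i = 3) \<and> (j = 0 \<or> j = 3) then 1 else 0)"

text \<open>The (unnormalized) Choi matrix of a qubit channel \<open>A \<rightarrow> A\<^sub>1A\<^sub>2\<close>, the reference
  qubit playing the role of \<open>B\<close>, so that it is indexed like the states on \<open>A\<^sub>1A\<^sub>2B\<close>.\<close>
definition choi :: "(complex mat \<Rightarrow> complex mat) \<Rightarrow> complex mat" where
  "choi L = tensor_id L 2 4 2 phi_plus"

lemma psd_phi_plus: "psd 4 phi_plus"
proof -
  have "adj phi_plus = phi_plus" unfolding adj_def phi_plus_def by (rule eq_matI) auto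
  moreover have "Im q = 0 \<and> Re q \<ge> 0"
    if "q = (\<Sum>i<4. \<Sum>j<4. cnj (v $ i) * phi_plus $$ (i,j) * v $ j)" for q v
  proof -
    have "q = cnj (v $ 0 + v $ 3) * (v $ 0 + v $ 3)"
      unfolding that sum_lessThan_4 phi_plus_def by (simp add: algebra_simps)
    also have "\<dots> = complex_of_real ((norm (v $ 0 + v $ 3))\<^sup>2)"
      by (metis complex_norm_square mult.commute)
    finally show ?thesis by simp
  qed
  ultimately show ?thesis unfolding psd_def Let_def phi_plus_def by auto
qed

lemma psd_choi:
  assumes "quantum_channel L 2 4"
  shows "psd 8 (choi L)"
  using assms psd_phi_plus unfolding quantum_channel_def choi_def
  by (metis mult_2_right numeral_Bit0 numeral_times_numeral)

definition psi_amp :: "real \<Rightarrow> nat \<Rightarrow> complex" where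
  "psi_amp \<theta> b = (if b = 0 then complex_of_real (cos \<theta>) else complex_of_real (sin \<theta>))"

text \<open>\<open>\<psi>\<^sub>\<theta> = (1 \<otimes> D) \<Phi>\<^sup>+ (1 \<otimes> D)\<close> with \<open>D = diag(cos \<theta>, sin \<theta>)\<close> acting on \<open>B\<close>, which
  commutes with a channel acting on \<open>A\<close>.\<close>
lemma index_tensor_id_psi:
  assumes L: "quantum_channel L 2 4" and ij: "i < 8" "j < 8"
  shows "tensor_id L 2 4 2 (psi \<theta>) $$ (i,j) = psi_amp \<theta> (i mod 2) * psi_amp \<theta> (j mod 2) * choi L $$ (i,j)"
proof -
  define B\<Phi> where "B\<Phi> = mat 2 2 (\<lambda>(a,a'). phi_plus $$ (a * 2 + i mod 2, a' * 2 + j mod 2))"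
  define B\<psi> where "B\<psi> = mat 2 2 (\<lambda>(a,a'). psi \<theta> $$ (a * 2 + i mod 2, a' * 2 + j mod 2))"
  have B\<Phi>_carrier: "B\<Phi> \<in> carrier_mat 2 2" unfolding B\<Phi>_def by simp
  have "B\<psi> = (psi_amp \<theta> (i mod 2) * psi_amp \<theta> (j mod 2)) \<cdot>\<^sub>m B\<Phi>"
  proof (rule eq_matI)
    fix a a' assume "a < dim_row ((psi_amp \<theta> (i mod 2) * psi_amp \<theta> (j mod 2)) \<cdot>\<^sub>m B\<Phi>)"
      "a' < dim_col ((psi_amp \<theta> (i mod 2) * psi_amp \<theta> (j mod 2)) \<cdot>\<^sub>m B\<Phi>)"
    then have "a \<in> {0,1}" "a' \<in> {0,1}" "i mod 2 \<in> {0,1}" "j mod 2 \<in> {0,1}" unfolding B\<Phi>_def by auto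
    then show "B\<psi> $$ (a,a') = ((psi_amp \<theta> (i mod 2) * psi_amp \<theta> (j mod 2)) \<cdot>\<^sub>m B\<Phi>) $$ (a,a')"
      unfolding B\<psi>_def B\<Phi>_def by (auto simp: index_psi phi_plus_def psi_coeff_def psi_amp_def)
  qed (auto simp: B\<psi>_def B\<Phi>_def)
  then have "L B\<psi> = (psi_amp \<theta> (i mod 2) * psi_amp \<theta> (j mod 2)) \<cdot>\<^sub>m L B\<Phi>"
    using L B\<Phi>_carrier unfolding quantum_channel_def by blast
  moreover have "L B\<Phi> \<in> carrier_mat 4 4" using L B\<Phi>_carrier unfolding quantum_channel_def by blast
  moreover have "i div 2 < 4" "j div 2 < 4" using ij by auto
  ultimately show ?thesis
    unfolding tensor_id_def choi_def using ij by (simp add: B\<psi>_def[symmetric] B\<Phi>_def[symmetric])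
qed

text \<open>The overlaps \<open>\<langle>\<psi>\<^sub>\<theta>|\<rho>\<^sub>A\<^sub>jB|\<psi>\<^sub>\<theta>\<rangle>\<close> of the two reduced output states, as linear functionals
  of the Choi matrix \<open>J\<close>, where \<open>C = cos\<^sup>2 \<theta>\<close> and \<open>S = sin\<^sup>2 \<theta>\<close>.\<close>
definition overlap_A1B :: "real \<Rightarrow> real \<Rightarrow> complex mat \<Rightarrow> real" where
  "overlap_A1B C S J = C\<^sup>2 * (Re (J $$ (0,0)) + Re (J $$ (2,2)))
     + C * S * (Re (J $$ (0,5)) + Re (J $$ (5,0)) + Re (J $$ (2,7)) + Re (J $$ (7,2)))
     + S\<^sup>2 * (Re (J $$ (5,5)) + Re (J $$ (7,7)))"

definition overlap_A2B :: "real \<Rightarrow> real \<Rightarrow> complex mat \<Rightarrow> real" where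
  "overlap_A2B C S J = C\<^sup>2 * (Re (J $$ (0,0)) + Re (J $$ (4,4)))
     + C * S * (Re (J $$ (0,3)) + Re (J $$ (3,0)) + Re (J $$ (4,7)) + Re (J $$ (7,4)))
     + S\<^sup>2 * (Re (J $$ (3,3)) + Re (J $$ (7,7)))"

lemma fidelity_red_A1B:
  assumes L: "quantum_channel L 2 4" and c: "cos \<theta> > 0" and s: "sin \<theta> > 0"
  shows "fidelity (psi \<theta>) (red_A1B (tensor_id L 2 4 2 (psi \<theta>)))
      = sqrt (overlap_A1B ((cos \<theta>)\<^sup>2) ((sin \<theta>)\<^sup>2) (choi L))"
    and "overlap_A1B ((cos \<theta>)\<^sup>2) ((sin \<theta>)\<^sup>2) (choi L) \<ge> 0"
proof -
  define J where "J = choi L"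
  have J: "psd 8 J" using psd_choi[OF L] J_def by simp
  define C where "C = complex_of_real ((cos \<theta>)\<^sup>2)"
  define S where "S = complex_of_real ((sin \<theta>)\<^sup>2)"
  define p where "p = (\<Sum>i<4. \<Sum>j<4. psi_coeff \<theta> i * red_A1B (tensor_id L 2 4 2 (psi \<theta>)) $$ (i,j) * psi_coeff \<theta> j)"
  define q1 where "q1 = quad_form 8 J (\<lambda>k. if k = 0 then C else if k = 5 then S else 0)"
  define q2 where "q2 = quad_form 8 J (\<lambda>k. if k = 2 then C else if k = 7 then S else 0)"
  have q1: "q1 = C * C * J $$ (0,0) + C * S * J $$ (0,5) + S * C * J $$ (5,0) + S * S * J $$ (5,5)"
    unfolding q1_def by (subst quad_form_two_point) (auto simp: C_def S_def)
  have q2: "q2 = C * C * J $$ (2,2) + C * S * J $$ (2,7) + S * C * J $$ (7,2) + S * S * J $$ (7,7)"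
    unfolding q2_def by (subst quad_form_two_point) (auto simp: C_def S_def)
  have pq: "p = q1 + q2"
    unfolding p_def q1 q2 sum_lessThan_4 red_A1B_def using index_tensor_id_psi[OF L]
    by (simp add: sum_lessThan_2 psi_coeff_def psi_amp_def C_def S_def J_def power2_eq_square algebra_simps)
      (simp add: numeral_2_eq_2)
  have "Im p = 0" "Re p \<ge> 0" unfolding pq using psd_quad_form[OF J] q1_def q2_def by auto
  moreover have "Re p = overlap_A1B ((cos \<theta>)\<^sup>2) ((sin \<theta>)\<^sup>2) J"
    unfolding pq q1 q2 overlap_A1B_def C_def S_def by (simp add: power2_eq_square algebra_simps)
  ultimately show "fidelity (psi \<theta>) (red_A1B (tensor_id L 2 4 2 (psi \<theta>)))
      = sqrt (overlap_A1B ((cos \<theta>)\<^sup>2) ((sin \<theta>)\<^sup>2) (choi L))"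
    "overlap_A1B ((cos \<theta>)\<^sup>2) ((sin \<theta>)\<^sup>2) (choi L) \<ge> 0"
    using fidelity_psi[OF c s _ p_def] unfolding J_def by (auto simp: red_A1B_def)
qed

lemma fidelity_red_A2B:
  assumes L: "quantum_channel L 2 4" and c: "cos \<theta> > 0" and s: "sin \<theta> > 0"
  shows "fidelity (psi \<theta>) (red_A2B (tensor_id L 2 4 2 (psi \<theta>)))
      = sqrt (overlap_A2B ((cos \<theta>)\<^sup>2) ((sin \<theta>)\<^sup>2) (choi L))"
    and "overlap_A2B ((cos \<theta>)\<^sup>2) ((sin \<theta>)\<^sup>2) (choi L) \<ge> 0"
proof -
  define J where "J = choi L"
  have J: "psd 8 J" using psd_choi[OF L] J_def by simp
  define C where "C = complex_of_real ((cos \<theta>)\<^sup>2)"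
  define S where "S = complex_of_real ((sin \<theta>)\<^sup>2)"
  define p where "p = (\<Sum>i<4. \<Sum>j<4. psi_coeff \<theta> i * red_A2B (tensor_id L 2 4 2 (psi \<theta>)) $$ (i,j) * psi_coeff \<theta> j)"
  define q1 where "q1 = quad_form 8 J (\<lambda>k. if k = 0 then C else if k = 3 then S else 0)"
  define q2 where "q2 = quad_form 8 J (\<lambda>k. if k = 4 then C else if k = 7 then S else 0)"
  have q1: "q1 = C * C * J $$ (0,0) + C * S * J $$ (0,3) + S * C * J $$ (3,0) + S * S * J $$ (3,3)"
    unfolding q1_def by (subst quad_form_two_point) (auto simp: C_def S_def)
  have q2: "q2 = C * C * J $$ (4,4) + C * S * J $$ (4,7) + S * C * J $$ (7,4) + S * S * J $$ (7,7)"
    unfolding q2_def by (subst quad_form_two_point) (auto simp: C_def S_def)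
  have pq: "p = q1 + q2"
    unfolding p_def q1 q2 sum_lessThan_4 red_A2B_def using index_tensor_id_psi[OF L]
    by (simp add: sum_lessThan_2 psi_coeff_def psi_amp_def C_def S_def J_def power2_eq_square algebra_simps)
  have "Im p = 0" "Re p \<ge> 0" unfolding pq using psd_quad_form[OF J] q1_def q2_def by auto
  moreover have "Re p = overlap_A2B ((cos \<theta>)\<^sup>2) ((sin \<theta>)\<^sup>2) J"
    unfolding pq q1 q2 overlap_A2B_def C_def S_def by (simp add: power2_eq_square algebra_simps)
  ultimately show "fidelity (psi \<theta>) (red_A2B (tensor_id L 2 4 2 (psi \<theta>)))
      = sqrt (overlap_A2B ((cos \<theta>)\<^sup>2) ((sin \<theta>)\<^sup>2) (choi L))"
    "overlap_A2B ((cos \<theta>)\<^sup>2) ((sin \<theta>)\<^sup>2) (choi L) \<ge> 0"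
    using fidelity_psi[OF c s _ p_def] unfolding J_def by (auto simp: red_A2B_def)
qed

text \<open>Trace preservation: the partial trace of the Choi matrix over \<open>A\<^sub>1A\<^sub>2\<close> is the identity on \<open>B\<close>.\<close>
lemma choi_block_trace:
  assumes L: "quantum_channel L 2 4" and b: "b < 2"
  shows "(\<Sum>u<4. Re (choi L $$ (u*2 + b, u*2 + b))) = 1"
proof -
  define E where "E = mat 2 2 (\<lambda>(a,a'). phi_plus $$ (a * 2 + b, a' * 2 + b))"
  have E: "E \<in> carrier_mat 2 2" unfolding E_def by simp
  have "mtrace E = 1" using b unfolding mtrace_def E_def phi_plus_def by (auto simp: sum_lessThan_2)
  then have "mtrace (L E) = 1" using L E unfolding quantum_channel_def by metis
  moreover have "L E \<in> carrier_mat 4 4" using L E unfolding quantum_channel_def by blast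
  moreover have "choi L $$ (u*2 + b, u*2 + b) = L E $$ (u,u)" if "u < 4" for u
    using that b unfolding choi_def tensor_id_def E_def by simp
  ultimately show ?thesis unfolding mtrace_def by (simp add: Re_sum[symmetric])
qed

section \<open>The dual bound\<close>

text \<open>Feasibility for the dual semidefinite program: the matrices
  \<open>[[y\<^sub>0 - C\<^sup>2, -C S], [-C S, 2 y\<^sub>1 - S\<^sup>2]]\<close> and \<open>[[2 y\<^sub>0 - C\<^sup>2, -C S], [-C S, y\<^sub>1 - S\<^sup>2]]\<close> are
  positive semidefinite.\<close>
definition dual_feasible :: "real \<Rightarrow> real \<Rightarrow> real \<Rightarrow> real \<Rightarrow> bool" where
  "dual_feasible C S y0 y1 \<longleftrightarrow> C\<^sup>2 \<le> y0 \<and> S\<^sup>2 \<le> y1 \<and>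
     (C * S)\<^sup>2 \<le> (y0 - C\<^sup>2) * (2 * y1 - S\<^sup>2) \<and> (C * S)\<^sup>2 \<le> (2 * y0 - C\<^sup>2) * (y1 - S\<^sup>2)"

text \<open>Weak duality: the slack is a sum of four principal 2x2 minors of the Choi matrix paired
  with the dual matrices, plus two nonnegative diagonal entries.\<close>
lemma overlap_sum_le_dual:
  assumes L: "quantum_channel L 2 4" and y: "dual_feasible C S y0 y1"
  shows "overlap_A1B C S (choi L) + overlap_A2B C S (choi L) \<le> 2 * (y0 + y1)"
proof -
  define J where "J = choi L"
  define r where "r i j = Re (J $$ (i,j))" for i j
  have J: "psd 8 J" using psd_choi[OF L] J_def by simp
  have even: "r 0 0 + r 2 2 + r 4 4 + r 6 6 = 1" and odd: "r 1 1 + r 3 3 + r 5 5 + r 7 7 = 1"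
    using choi_block_trace[OF L, of 0] choi_block_trace[OF L, of 1]
    unfolding r_def J_def by (simp_all add: sum_lessThan_4)
  have diag: "r 6 6 \<ge> 0" "r 1 1 \<ge> 0" using psd_diag_nonneg[OF J] unfolding r_def by auto
  have "C\<^sup>2 \<le> y0" "S\<^sup>2 \<le> y1"
    and det: "(C * S)\<^sup>2 \<le> (y0 - C\<^sup>2) * (2 * y1 - S\<^sup>2)" "(C * S)\<^sup>2 \<le> (2 * y0 - C\<^sup>2) * (y1 - S\<^sup>2)"
    using y unfolding dual_feasible_def by auto
  then have y0: "y0 - C\<^sup>2 \<ge> 0" "2 * y0 - C\<^sup>2 \<ge> 0" "y0 \<ge> 0"
    and y1: "2 * y1 - S\<^sup>2 \<ge> 0" "y1 - S\<^sup>2 \<ge> 0" "y1 \<ge> 0"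
    using zero_le_power2[of C] zero_le_power2[of S] by linarith+
  have "(C * S) * (r 0 3 + r 3 0) \<le> (y0 - C\<^sup>2) * r 0 0 + (2 * y1 - S\<^sup>2) * r 3 3"
    "(C * S) * (r 0 5 + r 5 0) \<le> (y0 - C\<^sup>2) * r 0 0 + (2 * y1 - S\<^sup>2) * r 5 5"
    "(C * S) * (r 2 7 + r 7 2) \<le> (2 * y0 - C\<^sup>2) * r 2 2 + (y1 - S\<^sup>2) * r 7 7"
    "(C * S) * (r 4 7 + r 7 4) \<le> (2 * y0 - C\<^sup>2) * r 4 4 + (y1 - S\<^sup>2) * r 7 7"
    unfolding r_def using psd_off_diag_le[OF J] y0 y1 det by simp_all
  moreover have "2 * y0 * (r 0 0 + r 2 2 + r 4 4 + r 6 6) + 2 * y1 * (r 1 1 + r 3 3 + r 5 5 + r 7 7)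
      - (overlap_A1B C S J + overlap_A2B C S J)
    = ((y0 - C\<^sup>2) * r 0 0 + (2 * y1 - S\<^sup>2) * r 3 3 - (C * S) * (r 0 3 + r 3 0))
    + ((y0 - C\<^sup>2) * r 0 0 + (2 * y1 - S\<^sup>2) * r 5 5 - (C * S) * (r 0 5 + r 5 0))
    + ((2 * y0 - C\<^sup>2) * r 2 2 + (y1 - S\<^sup>2) * r 7 7 - (C * S) * (r 2 7 + r 7 2))
    + ((2 * y0 - C\<^sup>2) * r 4 4 + (y1 - S\<^sup>2) * r 7 7 - (C * S) * (r 4 7 + r 7 4))
    + 2 * y0 * r 6 6 + 2 * y1 * r 1 1"
    unfolding overlap_A1B_def overlap_A2B_def r_def by (simp add: algebra_simps)
  moreover have "0 \<le> 2 * y0 * r 6 6 + 2 * y1 * r 1 1" using y0 y1 diag by simp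
  ultimately have "overlap_A1B C S J + overlap_A2B C S J
      \<le> 2 * y0 * (r 0 0 + r 2 2 + r 4 4 + r 6 6) + 2 * y1 * (r 1 1 + r 3 3 + r 5 5 + r 7 7)"
    by linarith
  then show ?thesis unfolding even odd J_def by simp
qed

lemma dual_feasible_small_angle:
  fixes C S :: real
  assumes C: "C > 0" and S: "S > 0" and small: "sqrt 2 * S \<le> C"
  shows "dual_feasible C S (C\<^sup>2 + C * S / sqrt 2) (S\<^sup>2 / 2 + C * S / sqrt 2)"
proof -
  define k where "k = C * S / sqrt 2"
  have k: "k > 0" unfolding k_def using C S by simp
  have kk: "2 * k\<^sup>2 = (C * S)\<^sup>2" unfolding k_def by (simp add: power_divide)
  have "S / sqrt 2 \<le> sqrt 2 * S" using S by (simp add: field_simps)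
  then have "S / sqrt 2 * (S / sqrt 2) \<le> C * (S / sqrt 2)" using small S by (intro mult_right_mono) simp_all
  then have Sk: "S\<^sup>2 / 2 \<le> k" unfolding k_def by (simp add: power2_eq_square)
  have "C\<^sup>2 - S\<^sup>2 - k = (C - sqrt 2 * S) * (C + S / sqrt 2)"
    unfolding k_def by (simp add: field_simps power2_eq_square)
  moreover have "(C - sqrt 2 * S) * (C + S / sqrt 2) \<ge> 0" using small C S by simp
  ultimately have "0 \<le> k * (C\<^sup>2 - S\<^sup>2 - k)" using k by simp
  moreover have "(2 * (C\<^sup>2 + k) - C\<^sup>2) * (S\<^sup>2 / 2 + k - S\<^sup>2) - (C * S)\<^sup>2
      = k * (C\<^sup>2 - S\<^sup>2 - k) + 3 * k\<^sup>2 - 3/2 * (C * S)\<^sup>2"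
    by (simp add: algebra_simps power2_eq_square)
  ultimately have "(C * S)\<^sup>2 \<le> (2 * (C\<^sup>2 + k) - C\<^sup>2) * (S\<^sup>2 / 2 + k - S\<^sup>2)"
    using kk by linarith
  moreover have "(C\<^sup>2 + k - C\<^sup>2) * (2 * (S\<^sup>2 / 2 + k) - S\<^sup>2) = 2 * k\<^sup>2"
    by (simp add: power2_eq_square)
  ultimately show ?thesis unfolding dual_feasible_def k_def[symmetric] using k Sk kk by simp
qed

lemma dual_feasible_large_angle: "dual_feasible C S (3/2 * C\<^sup>2) (3/2 * S\<^sup>2)"
  unfolding dual_feasible_def by (simp add: power_mult_distrib)

section \<open>Optimal symmetric channels\<close>

text \<open>Kraus operators of a channel whose output is symmetric under exchange of \<open>A\<^sub>1\<close> and
  \<open>A\<^sub>2\<close>: \<open>K\<^sub>0 = x |00\<rangle>\<langle>0| + y (|01\<rangle> + |10\<rangle>)\<langle>1|\<close> and \<open>K\<^sub>1 = z (|01\<rangle> + |10\<rangle>)\<langle>0| + w |11\<rangle>\<langle>1|\<close>.\<close>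
definition sym_kraus0 :: "real \<Rightarrow> real \<Rightarrow> complex mat" where
  "sym_kraus0 x y = mat 4 2 (\<lambda>(u,b). if u = 0 \<and> b = 0 then complex_of_real x
     else if (u = 1 \<or> u = 2) \<and> b = 1 then complex_of_real y else 0)"

definition sym_kraus1 :: "real \<Rightarrow> real \<Rightarrow> complex mat" where
  "sym_kraus1 z w = mat 4 2 (\<lambda>(u,b). if (u = 1 \<or> u = 2) \<and> b = 0 then complex_of_real z
     else if u = 3 \<and> b = 1 then complex_of_real w else 0)"

definition sym_channel :: "real \<Rightarrow> real \<Rightarrow> real \<Rightarrow> real \<Rightarrow> complex mat \<Rightarrow> complex mat" where
  "sym_channel x y z w X = sym_kraus0 x y * X * adj (sym_kraus0 x y) + sym_kraus1 z w * X * adj (sym_kraus1 z w)"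

lemma dim_sym_kraus [simp]:
  "dim_row (sym_kraus0 x y) = 4" "dim_col (sym_kraus0 x y) = 2"
  "dim_row (sym_kraus1 z w) = 4" "dim_col (sym_kraus1 z w) = 2"
  unfolding sym_kraus0_def sym_kraus1_def by simp_all

lemma sym_kraus_carrier: "sym_kraus0 x y \<in> carrier_mat 4 2" "sym_kraus1 z w \<in> carrier_mat 4 2"
  by (simp_all add: carrier_matI)

lemma dim_sym_channel [simp]:
  "dim_row (sym_channel x y z w X) = 4" "dim_col (sym_channel x y z w X) = 4"
  unfolding sym_channel_def by simp_all

lemma sym_channel_carrier: "sym_channel x y z w X \<in> carrier_mat 4 4"
  by (simp add: carrier_matI)

lemma index_sym_channel:
  assumes X: "X \<in> carrier_mat 2 2" and ij: "i < 4" "j < 4"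
  shows "sym_channel x y z w X $$ (i,j) =
    (\<Sum>a<2. \<Sum>a'<2. sym_kraus0 x y $$ (i,a) * X $$ (a,a') * cnj (sym_kraus0 x y $$ (j,a'))) +
    (\<Sum>a<2. \<Sum>a'<2. sym_kraus1 z w $$ (i,a) * X $$ (a,a') * cnj (sym_kraus1 z w $$ (j,a')))"
  unfolding sym_channel_def using ij
  by (simp add: index_kraus[OF sym_kraus_carrier(1) X ij] index_kraus[OF sym_kraus_carrier(2) X ij])

lemma sym_channel_add:
  assumes X: "X \<in> carrier_mat 2 2" and Y: "Y \<in> carrier_mat 2 2"
  shows "sym_channel x y z w (X + Y) = sym_channel x y z w X + sym_channel x y z w Y"
proof (rule eq_matI)
  fix i j assume "i < dim_row (sym_channel x y z w X + sym_channel x y z w Y)"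
    "j < dim_col (sym_channel x y z w X + sym_channel x y z w Y)"
  then have ij: "i < 4" "j < 4" by simp_all
  have XY: "X + Y \<in> carrier_mat 2 2" using X Y by simp
  show "sym_channel x y z w (X + Y) $$ (i,j) = (sym_channel x y z w X + sym_channel x y z w Y) $$ (i,j)"
    using ij X Y
    by (simp add: index_sym_channel[OF XY ij] index_sym_channel[OF X ij] index_sym_channel[OF Y ij]
        sum_lessThan_2 algebra_simps)
qed simp_all

lemma sym_channel_smult:
  assumes X: "X \<in> carrier_mat 2 2"
  shows "sym_channel x y z w (c \<cdot>\<^sub>m X) = c \<cdot>\<^sub>m sym_channel x y z w X"
proof (rule eq_matI)
  have cX: "c \<cdot>\<^sub>m X \<in> carrier_mat 2 2" using X by simp
  fix i j assume "i < dim_row (c \<cdot>\<^sub>m sym_channel x y z w X)" "j < dim_col (c \<cdot>\<^sub>m sym_channel x y z w X)"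
  then have ij: "i < 4" "j < 4" by simp_all
  show "sym_channel x y z w (c \<cdot>\<^sub>m X) $$ (i,j) = (c \<cdot>\<^sub>m sym_channel x y z w X) $$ (i,j)"
    using ij X
    by (simp add: index_sym_channel[OF cX ij] index_sym_channel[OF X ij] sum_lessThan_2 algebra_simps)
qed simp_all

lemma mtrace_sym_channel:
  assumes X: "X \<in> carrier_mat 2 2" and n0: "x\<^sup>2 + 2 * z\<^sup>2 = 1" and n1: "2 * y\<^sup>2 + w\<^sup>2 = 1"
  shows "mtrace (sym_channel x y z w X) = mtrace X"
proof -
  have "mtrace (sym_channel x y z w X)
      = X $$ (0,0) * complex_of_real (x\<^sup>2 + 2 * z\<^sup>2) + X $$ (1,1) * complex_of_real (2 * y\<^sup>2 + w\<^sup>2)"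
    unfolding mtrace_def dim_sym_channel sum_lessThan_4 using X
    by (simp add: index_sym_channel sum_lessThan_2 sym_kraus0_def sym_kraus1_def power2_eq_square algebra_simps)
  also have "\<dots> = mtrace X" unfolding n0 n1 mtrace_def using X by (simp add: sum_lessThan_2)
  finally show ?thesis .
qed

lemma quantum_channel_sym_channel:
  assumes "x\<^sup>2 + 2 * z\<^sup>2 = 1" and "2 * y\<^sup>2 + w\<^sup>2 = 1"
  shows "quantum_channel (sym_channel x y z w) 2 4"
  unfolding quantum_channel_def
proof (intro conjI ballI allI impI)
  fix X :: "complex mat" assume X: "X \<in> carrier_mat 2 2"
  show "sym_channel x y z w X \<in> carrier_mat 4 4" by (rule sym_channel_carrier)
  show "mtrace (sym_channel x y z w X) = mtrace X" by (rule mtrace_sym_channel[OF X assms])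
  show "sym_channel x y z w (c \<cdot>\<^sub>m X) = c \<cdot>\<^sub>m sym_channel x y z w X" for c
    by (rule sym_channel_smult[OF X])
  show "sym_channel x y z w (X + Y) = sym_channel x y z w X + sym_channel x y z w Y"
    if "Y \<in> carrier_mat 2 2" for Y
    by (rule sym_channel_add[OF X that])
next
  fix n :: nat and X :: "complex mat" assume X: "psd (2 * n) X"
  have split: "tensor_id (sym_channel x y z w) 2 4 n X =
      tensor_id (\<lambda>Y. sym_kraus0 x y * Y * adj (sym_kraus0 x y)) 2 4 n X
      + tensor_id (\<lambda>Y. sym_kraus1 z w * Y * adj (sym_kraus1 z w)) 2 4 n X"
    unfolding sym_channel_def by (rule tensor_id_add) (auto intro: kraus_carrier sym_kraus_carrier)
  show "psd (4 * n) (tensor_id (sym_channel x y z w) 2 4 n X)"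
    unfolding split by (intro psd_add psd_tensor_id_kraus[OF sym_kraus_carrier(1) X]
        psd_tensor_id_kraus[OF sym_kraus_carrier(2) X])
qed

lemma index_choi_sym_channel:
  "i < 8 \<Longrightarrow> j < 8 \<Longrightarrow> choi (sym_channel x y z w) $$ (i,j) =
     sym_channel x y z w (mat 2 2 (\<lambda>(a,a'). phi_plus $$ (a * 2 + i mod 2, a' * 2 + j mod 2))) $$ (i div 2, j div 2)"
  unfolding choi_def tensor_id_def by simp

lemma overlap_A1B_sym_channel:
  "overlap_A1B C S (choi (sym_channel x y z w)) = (C * x + S * y)\<^sup>2 + (C * z + S * w)\<^sup>2"
  unfolding overlap_A1B_def
  apply (simp add: index_choi_sym_channel)
  apply (simp add: index_sym_channel sum_lessThan_2 sym_kraus0_def sym_kraus1_def phi_plus_def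
      power2_eq_square algebra_simps)
  done

lemma overlap_A2B_sym_channel:
  "overlap_A2B C S (choi (sym_channel x y z w)) = (C * x + S * y)\<^sup>2 + (C * z + S * w)\<^sup>2"
  unfolding overlap_A2B_def
  apply (simp add: index_choi_sym_channel)
  apply (simp add: index_sym_channel sum_lessThan_2 sym_kraus0_def sym_kraus1_def phi_plus_def
      power2_eq_square algebra_simps)
  done

section \<open>The optimal broadcasting fidelity\<close>

lemma sqrt_mean_le:
  fixes a b v :: real
  assumes "a \<ge> 0" "b \<ge> 0" "v \<ge> 0" "a + b \<le> 2 * v\<^sup>2"
  shows "(sqrt a + sqrt b) / 2 \<le> v"
proof -
  have "(sqrt a + sqrt b)\<^sup>2 \<le> 2 * (a + b)"
    using assms(1,2) sum_squares_bound[of "sqrt a" "sqrt b"] by (simp add: power2_sum)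
  also have "\<dots> \<le> (2 * v)\<^sup>2" using assms(4) by (simp add: power_mult_distrib)
  finally have "sqrt a + sqrt b \<le> 2 * v" by (rule power2_le_imp_le) (use assms(3) in simp)
  then show ?thesis by simp
qed

definition broadcast_value :: "real \<Rightarrow> real \<Rightarrow> real" where
  "broadcast_value C S = (if sqrt 2 * S \<le> C then C + S / sqrt 2 else sqrt (3/2 * (C\<^sup>2 + S\<^sup>2)))"

lemma broadcast_value_nonneg: "C \<ge> 0 \<Longrightarrow> S \<ge> 0 \<Longrightarrow> broadcast_value C S \<ge> 0"
  unfolding broadcast_value_def by simp

lemma overlap_sum_le_broadcast_value:
  assumes L: "quantum_channel L 2 4" and C: "C > 0" and S: "S > 0"
  shows "overlap_A1B C S (choi L) + overlap_A2B C S (choi L) \<le> 2 * (broadcast_value C S)\<^sup>2"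
proof (cases "sqrt 2 * S \<le> C")
  case True
  have "overlap_A1B C S (choi L) + overlap_A2B C S (choi L)
      \<le> 2 * ((C\<^sup>2 + C * S / sqrt 2) + (S\<^sup>2 / 2 + C * S / sqrt 2))"
    by (rule overlap_sum_le_dual[OF L dual_feasible_small_angle[OF C S True]])
  also have "\<dots> = 2 * (C + S / sqrt 2)\<^sup>2"
    by (simp add: power2_eq_square field_simps)
  finally show ?thesis unfolding broadcast_value_def using True by simp
next
  case False
  have "overlap_A1B C S (choi L) + overlap_A2B C S (choi L) \<le> 2 * (3/2 * C\<^sup>2 + 3/2 * S\<^sup>2)"
    by (rule overlap_sum_le_dual[OF L dual_feasible_large_angle])
  then show ?thesis unfolding broadcast_value_def using False by (simp add: algebra_simps)
qed

lemma sym_channel_parameters_optimal: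
  fixes C S :: real
  assumes C: "C > 0" and S: "S > 0" and SC: "S \<le> C"
  obtains x y z w where "x\<^sup>2 + 2 * z\<^sup>2 = 1" "2 * y\<^sup>2 + w\<^sup>2 = 1"
    "(C * x + S * y)\<^sup>2 + (C * z + S * w)\<^sup>2 = (broadcast_value C S)\<^sup>2"
proof (cases "sqrt 2 * S \<le> C")
  case True
  then have "broadcast_value C S = C + S / sqrt 2" unfolding broadcast_value_def by simp
  then show ?thesis by (intro that[where x = 1 and y = "1 / sqrt 2" and z = 0 and w = 0]) (simp_all add: power2_eq_square)
next
  case False
  define p where "p = sqrt ((2 * C\<^sup>2 - S\<^sup>2) / (3 * S\<^sup>2 * C\<^sup>2))"
  define q where "q = sqrt ((2 * S\<^sup>2 - C\<^sup>2) / (3 * S\<^sup>2 * C\<^sup>2))"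
  have "S\<^sup>2 \<le> C\<^sup>2" using SC S by (simp add: power_mono)
  then have "0 \<le> 2 * C\<^sup>2 - S\<^sup>2" using zero_le_power2[of C] by linarith
  then have "0 \<le> (2 * C\<^sup>2 - S\<^sup>2) / (3 * S\<^sup>2 * C\<^sup>2)"
    using C S by (intro divide_nonneg_pos) auto
  then have pp: "p\<^sup>2 = (2 * C\<^sup>2 - S\<^sup>2) / (3 * S\<^sup>2 * C\<^sup>2)" unfolding p_def by simp
  have "C\<^sup>2 < (sqrt 2 * S)\<^sup>2" using False C by (simp add: power_strict_mono)
  then have "0 \<le> 2 * S\<^sup>2 - C\<^sup>2" by (simp add: power_mult_distrib)
  then have "0 \<le> (2 * S\<^sup>2 - C\<^sup>2) / (3 * S\<^sup>2 * C\<^sup>2)"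
    using C S by (intro divide_nonneg_pos) auto
  then have qq: "q\<^sup>2 = (2 * S\<^sup>2 - C\<^sup>2) / (3 * S\<^sup>2 * C\<^sup>2)" unfolding q_def by simp
  show ?thesis
  proof (rule that[where x = "sqrt 2 * p * S" and y = "p * C / sqrt 2" and z = "q * S / sqrt 2"
        and w = "sqrt 2 * q * C"])
    show "(sqrt 2 * p * S)\<^sup>2 + 2 * (q * S / sqrt 2)\<^sup>2 = 1" "2 * (p * C / sqrt 2)\<^sup>2 + (sqrt 2 * q * C)\<^sup>2 = 1"
      using C S by (simp_all add: power_mult_distrib power_divide pp qq field_simps)
    have "(C * (sqrt 2 * p * S) + S * (p * C / sqrt 2))\<^sup>2 + (C * (q * S / sqrt 2) + S * (sqrt 2 * q * C))\<^sup>2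
        = 9/4 * 2 * (p\<^sup>2 + q\<^sup>2) * C\<^sup>2 * S\<^sup>2"
      by (simp add: power2_eq_square field_simps)
    also have "\<dots> = 3/2 * (C\<^sup>2 + S\<^sup>2)"
      using C S by (simp add: pp qq field_simps)
    finally show "(C * (sqrt 2 * p * S) + S * (p * C / sqrt 2))\<^sup>2 + (C * (q * S / sqrt 2) + S * (sqrt 2 * q * C))\<^sup>2
        = (broadcast_value C S)\<^sup>2"
      unfolding broadcast_value_def using False by simp
  qed
qed

definition avg_fidelity :: "real \<Rightarrow> (complex mat \<Rightarrow> complex mat) \<Rightarrow> real" where
  "avg_fidelity \<theta> L = (fidelity (psi \<theta>) (red_A1B (tensor_id L 2 4 2 (psi \<theta>)))
     + fidelity (psi \<theta>) (red_A2B (tensor_id L 2 4 2 (psi \<theta>)))) / 2"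

lemma avg_fidelity_le:
  assumes L: "quantum_channel L 2 4" and c: "cos \<theta> > 0" and s: "sin \<theta> > 0"
  shows "avg_fidelity \<theta> L \<le> broadcast_value ((cos \<theta>)\<^sup>2) ((sin \<theta>)\<^sup>2)"
  unfolding avg_fidelity_def fidelity_red_A1B(1)[OF L c s] fidelity_red_A2B(1)[OF L c s]
  using fidelity_red_A1B(2)[OF L c s] fidelity_red_A2B(2)[OF L c s]
    overlap_sum_le_broadcast_value[OF L] broadcast_value_nonneg c s
  by (intro sqrt_mean_le) simp_all

lemma avg_fidelity_attained:
  assumes c: "cos \<theta> > 0" and s: "sin \<theta> > 0" and sc: "(sin \<theta>)\<^sup>2 \<le> (cos \<theta>)\<^sup>2"
  shows "\<exists>L. quantum_channel L 2 4 \<and> avg_fidelity \<theta> L = broadcast_value ((cos \<theta>)\<^sup>2) ((sin \<theta>)\<^sup>2)"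
proof -
  obtain x y z w where norm: "x\<^sup>2 + 2 * z\<^sup>2 = 1" "2 * y\<^sup>2 + w\<^sup>2 = 1"
    and opt: "((cos \<theta>)\<^sup>2 * x + (sin \<theta>)\<^sup>2 * y)\<^sup>2 + ((cos \<theta>)\<^sup>2 * z + (sin \<theta>)\<^sup>2 * w)\<^sup>2
      = (broadcast_value ((cos \<theta>)\<^sup>2) ((sin \<theta>)\<^sup>2))\<^sup>2"
    using sym_channel_parameters_optimal[OF _ _ sc] c s by (metis zero_less_power)
  have L: "quantum_channel (sym_channel x y z w) 2 4" by (rule quantum_channel_sym_channel[OF norm])
  have "avg_fidelity \<theta> (sym_channel x y z w) = broadcast_value ((cos \<theta>)\<^sup>2) ((sin \<theta>)\<^sup>2)"
    unfolding avg_fidelity_def fidelity_red_A1B(1)[OF L c s] fidelity_red_A2B(1)[OF L c s]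
      overlap_A1B_sym_channel overlap_A2B_sym_channel opt
    using broadcast_value_nonneg[of "(cos \<theta>)\<^sup>2" "(sin \<theta>)\<^sup>2"] by simp
  with L show ?thesis by blast
qed

lemma le_arctan_iff_sin_cos:
  assumes "0 < \<theta>" "\<theta> < pi / 2"
  shows "\<theta> \<le> arctan (2 powr (-1/4)) \<longleftrightarrow> sqrt 2 * (sin \<theta>)\<^sup>2 \<le> (cos \<theta>)\<^sup>2"
proof -
  define a :: real where "a = 2 powr (-1/4)"
  have c: "cos \<theta> > 0" using assms by (intro cos_gt_zero_pi) (use pi_gt_zero in linarith)+
  have s: "sin \<theta> > 0" using assms by (intro sin_gt_zero) (use pi_gt_zero in linarith)+
  have "a\<^sup>2 = 2 powr (-1/4 + -1/4)" unfolding a_def power2_eq_square by (rule powr_add[symmetric])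
  also have "(-1/4 + -1/4) = - (1/2::real)" by simp
  also have "(2::real) powr (- (1/2)) = inverse (2 powr (1/2))" by (rule powr_minus)
  also have "(2::real) powr (1/2) = sqrt 2" by (rule powr_half_sqrt) simp
  finally have a2: "a\<^sup>2 = 1 / sqrt 2" by (simp add: divide_inverse)
  have "arctan (tan \<theta>) = \<theta>" using assms by (intro arctan_tan) (use pi_gt_zero in linarith)+
  then have "\<theta> \<le> arctan a \<longleftrightarrow> arctan (tan \<theta>) \<le> arctan a" by simp
  also have "\<dots> \<longleftrightarrow> tan \<theta> \<le> a" by (rule arctan_le_iff)
  also have "\<dots> \<longleftrightarrow> (tan \<theta>)\<^sup>2 \<le> a\<^sup>2"
  proof -
    have "tan \<theta> > 0" "a > 0" using c s unfolding a_def by (simp_all add: tan_def)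
    then show ?thesis using abs_le_square_iff[of "tan \<theta>" a] by simp
  qed
  also have "\<dots> \<longleftrightarrow> sqrt 2 * (sin \<theta>)\<^sup>2 \<le> (cos \<theta>)\<^sup>2"
    unfolding a2 using c by (simp add: tan_def power_divide field_simps)
  finally show ?thesis unfolding a_def .
qed

theorem theorem4:
  fixes \<theta> :: real
  assumes "0 < \<theta>" and "\<theta> \<le> pi / 4"
  shows "f2 (psi \<theta>) =
    (if \<theta> \<le> arctan (2 powr (-1/4))
     then (cos \<theta>)^2 + (sin \<theta>)^2 / sqrt 2
     else sqrt (3/2 * ((cos \<theta>)^4 + (sin \<theta>)^4)))"
proof -
  have c: "cos \<theta> > 0" and s: "sin \<theta> > 0"
    using assms pi_gt_zero by (intro cos_gt_zero_pi sin_gt_zero; linarith)+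
  have "0 \<le> cos (2 * \<theta>)" using assms by (intro cos_ge_zero) (use pi_gt_zero in linarith)+
  then have sc: "(sin \<theta>)\<^sup>2 \<le> (cos \<theta>)\<^sup>2" unfolding cos_double by simp
  have "f2 (psi \<theta>) = Sup {avg_fidelity \<theta> L | L. quantum_channel L 2 4}"
    unfolding f2_def avg_fidelity_def ..
  also have "\<dots> = broadcast_value ((cos \<theta>)\<^sup>2) ((sin \<theta>)\<^sup>2)"
  proof (rule cSup_eq_maximum)
    obtain L where "quantum_channel L 2 4" "avg_fidelity \<theta> L = broadcast_value ((cos \<theta>)\<^sup>2) ((sin \<theta>)\<^sup>2)"
      using avg_fidelity_attained[OF c s sc] by blast
    then show "broadcast_value ((cos \<theta>)\<^sup>2) ((sin \<theta>)\<^sup>2) \<in> {avg_fidelity \<theta> L | L. quantum_channel L 2 4}"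
      by force
  qed (use avg_fidelity_le[OF _ c s] in blast)
  also have "\<dots> = (if \<theta> \<le> arctan (2 powr (-1/4))
     then (cos \<theta>)^2 + (sin \<theta>)^2 / sqrt 2
     else sqrt (3/2 * ((cos \<theta>)^4 + (sin \<theta>)^4)))"
    using le_arctan_iff_sin_cos[of \<theta>] assms pi_gt_zero
    by (simp add: broadcast_value_def power_mult[symmetric])
  finally show ?thesis .
qed

end
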